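(* Let $\ast$ be a continuous $t$-norm and let $(X,M_X,\ast)$ and $(Y,M_Y,\ast)$ be compact non-Archimedean fuzzy metric spaces. Suppose that $t>0$ and $0<\varepsilon<1$ satisfy $M_{GH}(X,Y,t)>1-\varepsilon$. Then there exist $n\in\mathbb N$, points $x_1,\dots,x_n\in X$ and points $y_1,\dots,y_n\in Y$ such that: (i) for every $x\in X$ there is $i$ with $M_X(x,x_i,t)>(1-\varepsilon)\ast(1-\varepsilon)\ast(1-\varepsilon)$, and for every $y\in Y$ there is $i$ with $M_Y(y,y_i,t)>(1-\varepsilon)\ast(1-\varepsilon)\ast(1-\varepsilon)$; (ii) for all $i,j\in\{1,\dots,n\}$: (a) $M_X(x_i,x_j,t)\ge M_Y(y_i,y_j,t)\ast(1-\varepsilon)\ast(1-\varepsilon)$; (b) $M_Y(y_i,y_j,t)\ge M_X(x_i,x_j,t)\ast(1-\varepsilon)\ast(1-\varepsilon)$.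
   Context: A continuous $t$-norm is a binary operation $\ast:[0,1]\times[0,1]\to[0,1]$ which is associative, commutative, continuous, satisfies $a\ast 1=a$ for all $a$, and is monotone ($a\ast b\le c\ast d$ whenever $a\le c$, $b\le d$); by associativity, iterated expressions such as $a\ast b\ast c$ are unambiguous. A fuzzy metric space $(X,M,\ast)$ consists of a set $X$, a continuous $t$-norm $\ast$ and a map $M:X\times X\times[0,\infty)\to[0,1]$ such that for all $x,y,z\in X$ and $t,s>0$: (KM1) $M(x,y,0)=0$; (KM2) $M(x,y,t)=1$ for all $t>0$ if and only if $x=y$; (KM3) $M(x,y,t)=M(y,x,t)$; (KM4) $M(x,y,t)\ast M(y,z,s)\le M(x,z,t+s)$; (KM5) $M(x,y,\cdot):[0,\infty)\to[0,1]$ is left continuous. It is non-Archimedean if moreover $M(x,z,\max\{t,s\})\ge M(x,y,t)\ast M(y,z,s)$ for all $x,y,z\in X$, $t,s>0$; equivalently, $M(x,z,t)\ge M(x,y,t)\ast M(y,z,t)$ for all $x,y,z$, $t>0$, and $M(x,y,\cdot)$ is nondecreasing. The topology of $(X,M,\ast)$ is the one having as neighbourhood base at $x$ the balls $B(x,\varepsilon,t)=\{y\in X: M(x,y,t)>1-\varepsilon\}$, $0<\varepsilon<1$, $t>0$; "compact" refers to this topology. For nonempty compact $A,B\subseteq X$ and $t\ge 0$: $M(x,A,t)=\sup_{a\in A}M(x,a,t)$, $M(A,b,t)=\sup_{a\in A}M(a,b,t)$, and $H_M(A,B,t)=\min\{\inf_{a\in A}M(a,B,t),\ \inf_{b\in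 B}M(A,b,t)\}$. For non-Archimedean fuzzy metric spaces $(X,M_X,\ast)$, $(Y,M_Y,\ast)$ with the same $t$-norm, a fuzzy metric $M$ (with $t$-norm $\ast$) on the disjoint union $X\sqcup Y$ is admissible if its restrictions to $X$ and to $Y$ are $M_X$ and $M_Y$. The non-Archimedean Gromov–Hausdorff fuzzy metric is $M_{GH}(X,Y,t)=\sup\{H_M(X,Y,t): M \text{ an admissible non-Archimedean fuzzy metric on } X\sqcup Y\}$ for $t\ge0$. *)

theory Defs
  imports "HOL-Analysis.Analysis"
begin

text \<open>Continuous t-norm on [0,1], represented as a real function; only its values on
  [0,1] x [0,1] matter.\<close>
definition cont_tnorm :: "(real \<Rightarrow> real \<Rightarrow> real) \<Rightarrow> bool" where
  "cont_tnorm T \<longleftrightarrow>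
     (\<forall>a\<in>{0..1}. \<forall>b\<in>{0..1}. T a b \<in> {0..1}) \<and>
     (\<forall>a\<in>{0..1}. \<forall>b\<in>{0..1}. \<forall>c\<in>{0..1}. T (T a b) c = T a (T b c)) \<and>
     (\<forall>a\<in>{0..1}. \<forall>b\<in>{0..1}. T a b = T b a) \<and>
     continuous_on ({0..1} \<times> {0..1}) (\<lambda>(a, b). T a b) \<and>
     (\<forall>a\<in>{0..1}. T a 1 = a) \<and>
     (\<forall>a\<in>{0..1}. \<forall>b\<in>{0..1}. \<forall>c\<in>{0..1}. \<forall>d\<in>{0..1}.
        a \<le> c \<longrightarrow> b \<le> d \<longrightarrow> T a b \<le> T c d)"

text \<open>Fuzzy metric space (X, M, T) in the sense of Kramosil-Michalek (KM1)-(KM5);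
  M is only relevant on X x X x [0,\<infinity>).\<close>
definition fuzzy_metric :: "'a set \<Rightarrow> ('a \<Rightarrow> 'a \<Rightarrow> real \<Rightarrow> real) \<Rightarrow> (real \<Rightarrow> real \<Rightarrow> real) \<Rightarrow> bool" where
  "fuzzy_metric X M T \<longleftrightarrow>
     cont_tnorm T \<and>
     (\<forall>x\<in>X. \<forall>y\<in>X. \<forall>t\<ge>0. M x y t \<in> {0..1}) \<and>
     (\<forall>x\<in>X. \<forall>y\<in>X. M x y 0 = 0) \<and>
     (\<forall>x\<in>X. \<forall>y\<in>X. (\<forall>t>0. M x y t = 1) \<longleftrightarrow> x = y) \<and>
     (\<forall>x\<in>X. \<forall>y\<in>X. \<forall>t>0. M x y t = M y x t) \<and>
     (\<forall>x\<in>X. \<forall>y\<in>X. \<forall>z\<in>X. \<forall>t>0. \<forall>s>0. T (M x y t) (M y z s) \<le> M x z (t + s)) \<and>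
     (\<forall>x\<in>X. \<forall>y\<in>X. \<forall>t>0. ((M x y) \<longlongrightarrow> M x y t) (at_left t))"

definition na_fuzzy_metric :: "'a set \<Rightarrow> ('a \<Rightarrow> 'a \<Rightarrow> real \<Rightarrow> real) \<Rightarrow> (real \<Rightarrow> real \<Rightarrow> real) \<Rightarrow> bool" where
  "na_fuzzy_metric X M T \<longleftrightarrow>
     fuzzy_metric X M T \<and>
     (\<forall>x\<in>X. \<forall>y\<in>X. \<forall>z\<in>X. \<forall>t>0. \<forall>s>0. M x z (max t s) \<ge> T (M x y t) (M y z s))"

definition fball :: "'a set \<Rightarrow> ('a \<Rightarrow> 'a \<Rightarrow> real \<Rightarrow> real) \<Rightarrow> 'a \<Rightarrow> real \<Rightarrow> real \<Rightarrow> 'a set" where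
  "fball X M x e t = {y\<in>X. M x y t > 1 - e}"

definition fopen :: "'a set \<Rightarrow> ('a \<Rightarrow> 'a \<Rightarrow> real \<Rightarrow> real) \<Rightarrow> 'a set \<Rightarrow> bool" where
  "fopen X M U \<longleftrightarrow> U \<subseteq> X \<and>
     (\<forall>x\<in>U. \<exists>e t. 0 < e \<and> e < 1 \<and> 0 < t \<and> fball X M x e t \<subseteq> U)"

definition fcompact :: "'a set \<Rightarrow> ('a \<Rightarrow> 'a \<Rightarrow> real \<Rightarrow> real) \<Rightarrow> bool" where
  "fcompact X M \<longleftrightarrow>
     (\<forall>\<U>. (\<forall>U\<in>\<U>. fopen X M U) \<and> X \<subseteq> \<Union>\<U> \<longrightarrow>
        (\<exists>\<F>. \<F> \<subseteq> \<U> \<and> finite \<F> \<and> X \<subseteq> \<Union>\<F>))"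

definition hausdorff_fm :: "('a \<Rightarrow> 'a \<Rightarrow> real \<Rightarrow> real) \<Rightarrow> 'a set \<Rightarrow> 'a set \<Rightarrow> real \<Rightarrow> real" where
  "hausdorff_fm M A B t =
     min (INF a\<in>A. (SUP b\<in>B. M a b t)) (INF b\<in>B. (SUP a\<in>A. M a b t))"

definition admissible :: "'a set \<Rightarrow> ('a \<Rightarrow> 'a \<Rightarrow> real \<Rightarrow> real) \<Rightarrow> 'b set \<Rightarrow> ('b \<Rightarrow> 'b \<Rightarrow> real \<Rightarrow> real)
    \<Rightarrow> (real \<Rightarrow> real \<Rightarrow> real) \<Rightarrow> ('a + 'b \<Rightarrow> 'a + 'b \<Rightarrow> real \<Rightarrow> real) \<Rightarrow> bool" where
  "admissible X MX Y MY T M \<longleftrightarrow>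
     na_fuzzy_metric (Inl ` X \<union> Inr ` Y) M T \<and>
     (\<forall>x\<in>X. \<forall>x'\<in>X. \<forall>t\<ge>0. M (Inl x) (Inl x') t = MX x x' t) \<and>
     (\<forall>y\<in>Y. \<forall>y'\<in>Y. \<forall>t\<ge>0. M (Inr y) (Inr y') t = MY y y' t)"

definition M_GH :: "'a set \<Rightarrow> ('a \<Rightarrow> 'a \<Rightarrow> real \<Rightarrow> real) \<Rightarrow> 'b set \<Rightarrow> ('b \<Rightarrow> 'b \<Rightarrow> real \<Rightarrow> real)
    \<Rightarrow> (real \<Rightarrow> real \<Rightarrow> real) \<Rightarrow> real \<Rightarrow> real" where
  "M_GH X MX Y MY T t =
     (SUP M\<in>{M. admissible X MX Y MY T M}. hausdorff_fm M (Inl ` X) (Inr ` Y) t)"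

end

theory Submission
  imports Defs
begin

text \<open>An admissible metric \<open>M\<close> on \<open>X \<squnion> Y\<close> with \<open>H\<^sub>M(X, Y, t) > 1 - \<epsilon>\<close> relates every point of
  \<open>X\<close> to a point of \<open>Y\<close> at closeness \<open>> 1 - \<epsilon>\<close>, and vice versa. Compactness gives finite
  \<open>(1 - \<epsilon>)\<close>-nets of \<open>X\<close> and \<open>Y\<close>; pairing each net point with such a partner yields the points
  \<open>x\<^sub>i, y\<^sub>i\<close>. For two pairs, the non-Archimedean triangle inequality along
  \<open>x\<^sub>i \<rightarrow> y\<^sub>i \<rightarrow> y\<^sub>j \<rightarrow> x\<^sub>j\<close> (and along \<open>y\<^sub>i \<rightarrow> x\<^sub>i \<rightarrow> x\<^sub>j \<rightarrow> y\<^sub>j\<close>) gives (ii).\<close>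

lemma cont_tnorm_range:
  assumes "cont_tnorm T" "a \<in> {0..1}" "b \<in> {0..1}"
  shows "T a b \<in> {0..1}"
  using assms unfolding cont_tnorm_def by blast

lemma cont_tnorm_commute:
  assumes "cont_tnorm T" "a \<in> {0..1}" "b \<in> {0..1}"
  shows "T a b = T b a"
  using assms unfolding cont_tnorm_def by blast

lemma cont_tnorm_one:
  assumes "cont_tnorm T" "a \<in> {0..1}"
  shows "T a 1 = a"
  using assms unfolding cont_tnorm_def by blast

lemma cont_tnorm_mono:
  assumes "cont_tnorm T" "a \<in> {0..1}" "b \<in> {0..1}" "c \<in> {0..1}" "d \<in> {0..1}"
    and "a \<le> c" "b \<le> d"
  shows "T a b \<le> T c d"
  using assms unfolding cont_tnorm_def by blast

lemma cont_tnorm_continuous: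
  "cont_tnorm T \<Longrightarrow> continuous_on ({0..1} \<times> {0..1}) (\<lambda>(a, b). T a b)"
  unfolding cont_tnorm_def by (elim conjE)

lemma cont_tnorm_le_left:
  assumes "cont_tnorm T" "a \<in> {0..1}" "b \<in> {0..1}"
  shows "T a b \<le> a"
  using cont_tnorm_mono[OF assms(1,2,3) assms(2), of 1] cont_tnorm_one[OF assms(1,2)] assms(3)
  by simp

lemma cont_tnorm_le_right:
  assumes "cont_tnorm T" "a \<in> {0..1}" "b \<in> {0..1}"
  shows "T a b \<le> b"
  using cont_tnorm_le_left[OF assms(1,3,2)] cont_tnorm_commute[OF assms] by simp

lemma cont_tnorm_cube_le:
  assumes "cont_tnorm T" "a \<in> {0..1}"
  shows "T (T a a) a \<le> a"
  using cont_tnorm_le_left[OF assms(1) cont_tnorm_range[OF assms assms(2)] assms(2)]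
    cont_tnorm_le_left[OF assms assms(2)] by linarith

lemma na_fuzzy_metric_fuzzy_metric: "na_fuzzy_metric X M T \<Longrightarrow> fuzzy_metric X M T"
  unfolding na_fuzzy_metric_def by (elim conjE)

lemma fuzzy_metric_cont_tnorm: "fuzzy_metric X M T \<Longrightarrow> cont_tnorm T"
  unfolding fuzzy_metric_def by (elim conjE)

lemma fuzzy_metric_range:
  assumes "fuzzy_metric X M T" "x \<in> X" "y \<in> X" "t \<ge> 0"
  shows "M x y t \<in> {0..1}"
proof -
  have "\<forall>x\<in>X. \<forall>y\<in>X. \<forall>t\<ge>0. M x y t \<in> {0..1}"
    using assms(1) unfolding fuzzy_metric_def by (elim conjE)
  then show ?thesis using assms(2-) by blast
qed

lemma fuzzy_metric_zero:
  assumes "fuzzy_metric X M T" "x \<in> X" "y \<in> X"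
  shows "M x y 0 = 0"
proof -
  have "\<forall>x\<in>X. \<forall>y\<in>X. M x y 0 = 0"
    using assms(1) unfolding fuzzy_metric_def by (elim conjE)
  then show ?thesis using assms(2-) by blast
qed

lemma fuzzy_metric_eq_iff:
  assumes "fuzzy_metric X M T" "x \<in> X" "y \<in> X"
  shows "(\<forall>t>0. M x y t = 1) \<longleftrightarrow> x = y"
proof -
  have "\<forall>x\<in>X. \<forall>y\<in>X. (\<forall>t>0. M x y t = 1) \<longleftrightarrow> x = y"
    using assms(1) unfolding fuzzy_metric_def by (elim conjE)
  then show ?thesis using assms(2-) by blast
qed

lemma fuzzy_metric_self:
  assumes "fuzzy_metric X M T" "x \<in> X" "t > 0"
  shows "M x x t = 1"
  using fuzzy_metric_eq_iff[OF assms(1,2,2)] assms(3) by blast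

lemma fuzzy_metric_commute:
  assumes "fuzzy_metric X M T" "x \<in> X" "y \<in> X" "t > 0"
  shows "M x y t = M y x t"
proof -
  have "\<forall>x\<in>X. \<forall>y\<in>X. \<forall>t>0. M x y t = M y x t"
    using assms(1) unfolding fuzzy_metric_def by (elim conjE)
  then show ?thesis using assms(2-) by blast
qed

lemma fuzzy_metric_triangle:
  assumes "fuzzy_metric X M T" "x \<in> X" "y \<in> X" "z \<in> X" "t > 0" "s > 0"
  shows "T (M x y t) (M y z s) \<le> M x z (t + s)"
proof -
  have "\<forall>x\<in>X. \<forall>y\<in>X. \<forall>z\<in>X. \<forall>t>0. \<forall>s>0. T (M x y t) (M y z s) \<le> M x z (t + s)"
    using assms(1) unfolding fuzzy_metric_def by (elim conjE)
  then show ?thesis using assms(2-) by blast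
qed

lemma fuzzy_metric_left_continuous:
  assumes "fuzzy_metric X M T" "x \<in> X" "y \<in> X" "t > 0"
  shows "(M x y \<longlongrightarrow> M x y t) (at_left t)"
proof -
  have "\<forall>x\<in>X. \<forall>y\<in>X. \<forall>t>0. (M x y \<longlongrightarrow> M x y t) (at_left t)"
    using assms(1) unfolding fuzzy_metric_def by (elim conjE)
  then show ?thesis using assms(2-) by blast
qed

lemma na_fuzzy_metric_ultrametric:
  assumes "na_fuzzy_metric X M T" "x \<in> X" "y \<in> X" "z \<in> X" "t > 0" "s > 0"
  shows "T (M x y t) (M y z s) \<le> M x z (max t s)"
proof -
  have "\<forall>x\<in>X. \<forall>y\<in>X. \<forall>z\<in>X. \<forall>t>0. \<forall>s>0. M x z (max t s) \<ge> T (M x y t) (M y z s)"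
    using assms(1) unfolding na_fuzzy_metric_def by (elim conjE)
  then show ?thesis using assms(2-) by blast
qed

lemma na_fuzzy_metric_triangle:
  assumes "na_fuzzy_metric X M T" "x \<in> X" "y \<in> X" "z \<in> X" "t > 0"
  shows "T (M x y t) (M y z t) \<le> M x z t"
  using na_fuzzy_metric_ultrametric[OF assms, of t] assms(5) by simp

text \<open>Points of different summands are at closeness \<open>0\<close>: every triangle inequality that
  crosses between the summands then holds because \<open>T a 0 = 0\<close>.\<close>

fun sum_fm :: "('a \<Rightarrow> 'a \<Rightarrow> real \<Rightarrow> real) \<Rightarrow> ('b \<Rightarrow> 'b \<Rightarrow> real \<Rightarrow> real)
    \<Rightarrow> 'a + 'b \<Rightarrow> 'a + 'b \<Rightarrow> real \<Rightarrow> real" where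
  "sum_fm MX MY (Inl x) (Inl x') = MX x x'"
| "sum_fm MX MY (Inr y) (Inr y') = MY y y'"
| "sum_fm MX MY _ _ = (\<lambda>_. 0)"

lemma admissible_sum_fm:
  assumes X: "na_fuzzy_metric X MX T" and Y: "na_fuzzy_metric Y MY T"
  shows "admissible X MX Y MY T (sum_fm MX MY)"
proof -
  let ?Z = "Inl ` X \<union> Inr ` Y" and ?M = "sum_fm MX MY"
  have fX: "fuzzy_metric X MX T" and fY: "fuzzy_metric Y MY T"
    using X Y by (simp_all add: na_fuzzy_metric_fuzzy_metric)
  have T: "cont_tnorm T"
    using fX by (rule fuzzy_metric_cont_tnorm)
  have absorb: "T a 0 = 0" "T 0 a = 0" if "a \<in> {0..1}" for a
    using cont_tnorm_le_left[OF T, of 0 a] cont_tnorm_le_right[OF T, of a 0]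
      cont_tnorm_range[OF T, of 0 a] cont_tnorm_range[OF T, of a 0] that by auto
  note rangeXY = fuzzy_metric_range[OF fX] fuzzy_metric_range[OF fY]
  have "fuzzy_metric ?Z ?M T"
    unfolding fuzzy_metric_def
  proof (intro conjI)
    show "cont_tnorm T" by fact
    show "\<forall>u\<in>?Z. \<forall>v\<in>?Z. \<forall>t\<ge>0. ?M u v t \<in> {0..1}"
      using rangeXY by auto
    show "\<forall>u\<in>?Z. \<forall>v\<in>?Z. ?M u v 0 = 0"
      using fuzzy_metric_zero[OF fX] fuzzy_metric_zero[OF fY] by auto
    show "\<forall>u\<in>?Z. \<forall>v\<in>?Z. (\<forall>t>0. ?M u v t = 1) \<longleftrightarrow> u = v"
      using fuzzy_metric_eq_iff[OF fX] fuzzy_metric_eq_iff[OF fY]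
        fuzzy_metric_self[OF fX] fuzzy_metric_self[OF fY] by (auto dest: spec[of _ 1])
    show "\<forall>u\<in>?Z. \<forall>v\<in>?Z. \<forall>t>0. ?M u v t = ?M v u t"
      using fuzzy_metric_commute[OF fX] fuzzy_metric_commute[OF fY] by auto
    show "\<forall>u\<in>?Z. \<forall>v\<in>?Z. \<forall>w\<in>?Z. \<forall>t>0. \<forall>s>0. T (?M u v t) (?M v w s) \<le> ?M u w (t + s)"
      using fuzzy_metric_triangle[OF fX] fuzzy_metric_triangle[OF fY] rangeXY absorb by auto
    show "\<forall>u\<in>?Z. \<forall>v\<in>?Z. \<forall>t>0. (?M u v \<longlongrightarrow> ?M u v t) (at_left t)"
      using fuzzy_metric_left_continuous[OF fX] fuzzy_metric_left_continuous[OF fY] by auto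
  qed
  moreover have "\<forall>u\<in>?Z. \<forall>v\<in>?Z. \<forall>w\<in>?Z. \<forall>t>0. \<forall>s>0. T (?M u v t) (?M v w s) \<le> ?M u w (max t s)"
    using na_fuzzy_metric_ultrametric[OF X] na_fuzzy_metric_ultrametric[OF Y] rangeXY absorb by auto
  ultimately show ?thesis
    unfolding admissible_def na_fuzzy_metric_def by simp
qed

lemma cont_tnorm_near_one:
  assumes T: "cont_tnorm T" and r: "r \<in> {0..1}" and less: "a < r"
  obtains \<delta> where "0 < \<delta>" "\<delta> < 1" "\<And>b. b \<in> {0..1} \<Longrightarrow> 1 - \<delta> < b \<Longrightarrow> a < T r b"
proof -
  have "continuous_on {0..1} (Pair r)"
    by (intro continuous_intros)
  moreover have "Pair r ` {0..1} \<subseteq> {0..1} \<times> {0..1}"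
    using r by auto
  ultimately have "continuous_on {0..1} (\<lambda>b. case Pair r b of (a, b) \<Rightarrow> T a b)"
    by (rule continuous_on_compose2[OF cont_tnorm_continuous[OF T]])
  then have "(T r \<longlongrightarrow> T r 1) (at 1 within {0..1})"
    by (simp add: eta_contract_eq continuous_on_def)
  moreover have T_r_1: "a < T r 1"
    using less cont_tnorm_one[OF T r] by simp
  ultimately have "\<forall>\<^sub>F b in at 1 within {0..1}. a < T r b"
    by (rule order_tendstoD)
  then obtain d where d: "d > 0"
    and near: "\<And>b. b \<in> {0..1} \<Longrightarrow> b \<noteq> 1 \<Longrightarrow> dist b 1 < d \<Longrightarrow> a < T r b"
    unfolding eventually_at by blast
  show ?thesis
  proof (rule that[of "min d (1/2)"])
    show "0 < min d (1/2)" "min d (1/2) < 1"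
      using d by auto
    fix b assume "b \<in> {0..1}" "1 - min d (1/2) < b"
    then show "a < T r b"
      using near[of b] T_r_1 by (cases "b = 1") (auto simp: dist_real_def)
  qed
qed

lemma fball_fopen:
  assumes N: "na_fuzzy_metric X M T" and x: "x \<in> X" and t: "t > 0"
  shows "fopen X M (fball X M x e t)"
  unfolding fopen_def
proof (intro conjI ballI)
  show "fball X M x e t \<subseteq> X"
    unfolding fball_def by auto
  fix y assume "y \<in> fball X M x e t"
  then have y: "y \<in> X" and close: "1 - e < M x y t"
    unfolding fball_def by auto
  have F: "fuzzy_metric X M T"
    using N by (rule na_fuzzy_metric_fuzzy_metric)
  have T: "cont_tnorm T"
    using F by (rule fuzzy_metric_cont_tnorm)
  obtain \<delta> where \<delta>: "0 < \<delta>" "\<delta> < 1"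
    and near: "\<And>b. b \<in> {0..1} \<Longrightarrow> 1 - \<delta> < b \<Longrightarrow> 1 - e < T (M x y t) b"
    using cont_tnorm_near_one[OF T fuzzy_metric_range[OF F x y] close] t by auto
  have "fball X M y \<delta> t \<subseteq> fball X M x e t"
  proof
    fix w assume "w \<in> fball X M y \<delta> t"
    then have w: "w \<in> X" and "1 - \<delta> < M y w t"
      unfolding fball_def by auto
    then have "1 - e < T (M x y t) (M y w t)"
      using near fuzzy_metric_range[OF F y w] t by simp
    also have "\<dots> \<le> M x w t"
      using na_fuzzy_metric_triangle[OF N x y w t] .
    finally show "w \<in> fball X M x e t"
      using w unfolding fball_def by simp
  qed
  with \<delta> t show "\<exists>e' t'. 0 < e' \<and> e' < 1 \<and> 0 < t' \<and> fball X M y e' t' \<subseteq> fball X M x e t"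
    by blast
qed

lemma fcompact_finite_net:
  assumes N: "na_fuzzy_metric X M T" and C: "fcompact X M" and t: "t > 0" and e: "0 < e"
  obtains F where "finite F" "F \<subseteq> X" "\<forall>x\<in>X. \<exists>c\<in>F. 1 - e < M x c t"
proof -
  have F: "fuzzy_metric X M T"
    using N by (rule na_fuzzy_metric_fuzzy_metric)
  let ?\<U> = "(\<lambda>c. fball X M c e t) ` X"
  have "X \<subseteq> \<Union>?\<U>"
    using fuzzy_metric_self[OF F _ t] e unfolding fball_def by force
  moreover have "\<forall>U\<in>?\<U>. fopen X M U"
    using fball_fopen[OF N _ t] by blast
  ultimately obtain \<F> where "\<F> \<subseteq> ?\<U>" "finite \<F>" and cover: "X \<subseteq> \<Union>\<F>"
    using C unfolding fcompact_def by meson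
  then obtain F where F_sub: "F \<subseteq> X" and "finite F" and \<F>: "\<F> = (\<lambda>c. fball X M c e t) ` F"
    using finite_subset_image[of \<F> "\<lambda>c. fball X M c e t" X] by blast
  moreover have "\<exists>c\<in>F. 1 - e < M x c t" if x: "x \<in> X" for x
  proof -
    obtain c where c: "c \<in> F" "x \<in> fball X M c e t"
      using cover x unfolding \<F> by blast
    then have "M x c t = M c x t"
      using fuzzy_metric_commute[OF F x _ t] F_sub by blast
    with c show ?thesis
      unfolding fball_def by force
  qed
  ultimately show ?thesis
    using that by blast
qed

lemma real_less_SUP_imp:
  fixes f :: "'a \<Rightarrow> real"
  assumes A: "A \<noteq> {}" and less: "c < (SUP a\<in>A. f a)"
  obtains a where "a \<in> A" "c < f a"
proof (cases "bdd_above (f ` A)")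
  case True
  then show ?thesis
    using less_cSUP_iff[OF A True] less that by blast
next
  case False \<comment> \<open>the supremum is then an unspecified real, but some \<open>f a\<close> exceeds \<open>c\<close> anyway\<close>
  then have "\<not> (\<forall>a\<in>A. f a \<le> c)"
    by (auto intro: bdd_aboveI2)
  then show ?thesis
    using that by (auto simp: not_le)
qed

lemma less_INF_SUP_imp:
  fixes f :: "'a \<Rightarrow> 'b \<Rightarrow> real"
  assumes B: "B \<noteq> {}" and range: "\<And>a b. a \<in> A \<Longrightarrow> b \<in> B \<Longrightarrow> f a b \<in> {0..1}"
    and less: "c < (INF a\<in>A. SUP b\<in>B. f a b)" and a: "a \<in> A"
  obtains b where "b \<in> B" "c < f a b"
proof -
  have bdd: "bdd_above (f a' ` B)" if "a' \<in> A" for a'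
    using range[OF that] by (intro bdd_aboveI[of _ 1]) auto
  obtain b0 where b0: "b0 \<in> B"
    using B by blast
  have "0 \<le> (SUP b\<in>B. f a' b)" if "a' \<in> A" for a'
    using cSUP_upper2[OF bdd[OF that] b0] range[OF that b0] by simp
  then have "bdd_below ((\<lambda>a'. SUP b\<in>B. f a' b) ` A)"
    by (intro bdd_belowI[of _ 0]) auto
  then have "(INF a'\<in>A. SUP b\<in>B. f a' b) \<le> (SUP b\<in>B. f a b)"
    using a by (rule cINF_lower)
  with less have "c < (SUP b\<in>B. f a b)"
    by linarith
  then show ?thesis
    using less_cSUP_iff[OF B bdd[OF a]] that by blast
qed

lemma hausdorff_fm_less_imp:
  assumes A: "A \<noteq> {}" and B: "B \<noteq> {}"
    and range: "\<And>a b. a \<in> A \<Longrightarrow> b \<in> B \<Longrightarrow> M a b t \<in> {0..1}"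
    and less: "c < hausdorff_fm M A B t"
  shows "\<forall>a\<in>A. \<exists>b\<in>B. c < M a b t" and "\<forall>b\<in>B. \<exists>a\<in>A. c < M a b t"
proof -
  have less_A: "c < (INF a\<in>A. SUP b\<in>B. M a b t)" and less_B: "c < (INF b\<in>B. SUP a\<in>A. M a b t)"
    using less unfolding hausdorff_fm_def by simp_all
  have range': "M a b t \<in> {0..1}" if "b \<in> B" "a \<in> A" for a b
    using range that by simp
  show "\<forall>a\<in>A. \<exists>b\<in>B. c < M a b t"
  proof
    fix a assume "a \<in> A"
    with less_INF_SUP_imp[of B A "\<lambda>a b. M a b t", OF B range less_A] show "\<exists>b\<in>B. c < M a b t"
      by blast
  qed
  show "\<forall>b\<in>B. \<exists>a\<in>A. c < M a b t"
  proof
    fix b assume "b \<in> B"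
    with less_INF_SUP_imp[of A B "\<lambda>b a. M a b t", OF A range' less_B] show "\<exists>a\<in>A. c < M a b t"
      by blast
  qed
qed

lemma M_GH_less_imp_correspondence:
  assumes X: "na_fuzzy_metric X MX T" and Y: "na_fuzzy_metric Y MY T"
    and "X \<noteq> {}" "Y \<noteq> {}" "t > 0" and less: "c < M_GH X MX Y MY T t"
  obtains M where "admissible X MX Y MY T M"
    and "\<forall>x\<in>X. \<exists>y\<in>Y. c < M (Inl x) (Inr y) t" and "\<forall>y\<in>Y. \<exists>x\<in>X. c < M (Inl x) (Inr y) t"
proof -
  have "{M. admissible X MX Y MY T M} \<noteq> {}"
    using admissible_sum_fm[OF X Y] by blast
  from real_less_SUP_imp[OF this less[unfolded M_GH_def]]
  obtain M where M: "admissible X MX Y MY T M" and H: "c < hausdorff_fm M (Inl ` X) (Inr ` Y) t"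
    by blast
  have F: "fuzzy_metric (Inl ` X \<union> Inr ` Y) M T"
    using M unfolding admissible_def by (simp add: na_fuzzy_metric_fuzzy_metric)
  have "M u v t \<in> {0..1}" if "u \<in> Inl ` X" "v \<in> Inr ` Y" for u v
    using fuzzy_metric_range[OF F, of u v t] that \<open>t > 0\<close> by simp
  from hausdorff_fm_less_imp[OF _ _ this H] assms(3,4)
  have "\<forall>x\<in>X. \<exists>y\<in>Y. c < M (Inl x) (Inr y) t" and "\<forall>y\<in>Y. \<exists>x\<in>X. c < M (Inl x) (Inr y) t"
    by simp_all
  with M show ?thesis
    by (rule that)
qed

lemma na_fuzzy_metric_close_pairs:
  assumes N: "na_fuzzy_metric Z M T" and pts: "a \<in> Z" "b \<in> Z" "a' \<in> Z" "b' \<in> Z"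
    and t: "t > 0" and c: "c \<in> {0..1}" and close: "c \<le> M a b t" "c \<le> M a' b' t"
  shows "T (T (M b b' t) c) c \<le> M a a' t"
proof -
  have F: "fuzzy_metric Z M T"
    using N by (rule na_fuzzy_metric_fuzzy_metric)
  have T: "cont_tnorm T"
    using F by (rule fuzzy_metric_cont_tnorm)
  have range: "M u v t \<in> {0..1}" if "u \<in> Z" "v \<in> Z" for u v
    using fuzzy_metric_range[OF F that] t by simp
  note mono = cont_tnorm_mono[OF T] and tri = na_fuzzy_metric_triangle[OF N _ _ _ t]
  have ab: "M a b t \<in> {0..1}" and bb': "M b b' t \<in> {0..1}" and b'a': "M b' a' t \<in> {0..1}"
    and ab': "M a b' t \<in> {0..1}"
    using range pts by simp_all
  have "T (T (M b b' t) c) c = T (T c (M b b' t)) c"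
    using cont_tnorm_commute[OF T bb' c] by simp
  also have "\<dots> \<le> T (T (M a b t) (M b b' t)) (M b' a' t)"
  proof (rule mono)
    show "T c (M b b' t) \<le> T (M a b t) (M b b' t)"
      using mono[OF c bb' ab bb'] close(1) by simp
    show "c \<le> M b' a' t"
      using close(2) fuzzy_metric_commute[OF F pts(3,4) t] by simp
  qed (use c ab bb' b'a' cont_tnorm_range[OF T] in auto)
  also have "\<dots> \<le> T (M a b' t) (M b' a' t)"
    using mono[OF cont_tnorm_range[OF T ab bb'] b'a' ab' b'a'] tri[OF pts(1,2,4)] by simp
  also have "\<dots> \<le> M a a' t"
    using tri[OF pts(1,4,3)] .
  finally show ?thesis .
qed

lemma admissible_close_pairs:
  assumes M: "admissible X MX Y MY T M" and x: "x \<in> X" "x' \<in> X" and y: "y \<in> Y" "y' \<in> Y"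
    and t: "t > 0" and c: "c \<in> {0..1}"
    and close: "c \<le> M (Inl x) (Inr y) t" "c \<le> M (Inl x') (Inr y') t"
  shows "T (T (MY y y' t) c) c \<le> MX x x' t" and "T (T (MX x x' t) c) c \<le> MY y y' t"
proof -
  let ?Z = "Inl ` X \<union> Inr ` Y"
  have N: "na_fuzzy_metric ?Z M T"
    and MX: "MX x x' t = M (Inl x) (Inl x') t" and MY: "MY y y' t = M (Inr y) (Inr y') t"
    using M x y t unfolding admissible_def by auto
  have pts: "Inl x \<in> ?Z" "Inl x' \<in> ?Z" "Inr y \<in> ?Z" "Inr y' \<in> ?Z"
    using x y by auto
  show "T (T (MY y y' t) c) c \<le> MX x x' t"
    unfolding MX MY using na_fuzzy_metric_close_pairs[OF N pts(1,3,2,4) t c close] .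
  have F: "fuzzy_metric ?Z M T"
    using N by (rule na_fuzzy_metric_fuzzy_metric)
  have "c \<le> M (Inr y) (Inl x) t" "c \<le> M (Inr y') (Inl x') t"
    using close fuzzy_metric_commute[OF F _ _ t] pts by simp_all
  then show "T (T (MX x x' t) c) c \<le> MY y y' t"
    unfolding MX MY using na_fuzzy_metric_close_pairs[OF N pts(3,1,4,2) t c] by blast
qed

lemma enumerate_covering_pairs:
  assumes "finite A" "finite B" and AB: "\<forall>a\<in>A. \<exists>b. R a b" and BA: "\<forall>b\<in>B. \<exists>a. R a b"
  obtains n :: nat and f g where "\<forall>i<n. R (f i) (g i)" "A \<subseteq> f ` {..<n}" "B \<subseteq> g ` {..<n}"
proof -
  obtain f where f: "\<forall>a\<in>A. R a (f a)"
    using bchoice[OF AB] by blast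
  obtain g where g: "\<forall>b\<in>B. R (g b) b"
    using bchoice[OF BA] by blast
  define P where "P = (\<lambda>a. (a, f a)) ` A \<union> (\<lambda>b. (g b, b)) ` B"
  have "finite P"
    unfolding P_def using assms(1,2) by simp
  then obtain p where "bij_betw p {0..<card P} P"
    using ex_bij_betw_nat_finite by blast
  then have p: "p ` {..<card P} = P"
    by (simp add: bij_betw_def atLeast0LessThan)
  show ?thesis
  proof (rule that[of "card P" "fst \<circ> p" "snd \<circ> p"])
    show "\<forall>i<card P. R ((fst \<circ> p) i) ((snd \<circ> p) i)"
    proof (intro allI impI)
      fix i assume "i < card P"
      then have "p i \<in> P"
        using p by auto
      then show "R ((fst \<circ> p) i) ((snd \<circ> p) i)"
        using f g unfolding P_def by auto
    qed
    show "A \<subseteq> (fst \<circ> p) ` {..<card P}" "B \<subseteq> (snd \<circ> p) ` {..<card P}"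
      unfolding image_comp[symmetric] p by (force simp: P_def)+
  qed
qed

lemma finite_net_reindex:
  fixes M :: "'a \<Rightarrow> 'b \<Rightarrow> real"
  assumes net: "\<forall>x\<in>X. \<exists>c\<in>F. a < M x c" and F: "F \<subseteq> f ` {..<n}" and "b \<le> a"
  shows "\<forall>x\<in>X. \<exists>i<n. b < M x (f i)"
proof
  fix x assume "x \<in> X"
  then obtain c where "c \<in> F" and c: "a < M x c"
    using net by blast
  then obtain i where "i < n" "c = f i"
    using F by auto
  with c \<open>b \<le> a\<close> show "\<exists>i<n. b < M x (f i)"
    by (intro exI[of _ i]) simp
qed

theorem mainTheorem1:
  fixes X :: "'a set" and MX :: "'a \<Rightarrow> 'a \<Rightarrow> real \<Rightarrow> real"
    and Y :: "'b set" and MY :: "'b \<Rightarrow> 'b \<Rightarrow> real \<Rightarrow> real"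
    and T :: "real \<Rightarrow> real \<Rightarrow> real" and t e :: real
  assumes "cont_tnorm T"
    and "na_fuzzy_metric X MX T" and "na_fuzzy_metric Y MY T"
    and "X \<noteq> {}" and "Y \<noteq> {}"
    and "fcompact X MX" and "fcompact Y MY"
    and "t > 0" and "0 < e" and "e < 1"
    and "M_GH X MX Y MY T t > 1 - e"
  shows "\<exists>(n::nat) (xs::nat \<Rightarrow> 'a) (ys::nat \<Rightarrow> 'b).
           (\<forall>i<n. xs i \<in> X \<and> ys i \<in> Y) \<and>
           (\<forall>x\<in>X. \<exists>i<n. MX x (xs i) t > T (T (1 - e) (1 - e)) (1 - e)) \<and>
           (\<forall>y\<in>Y. \<exists>i<n. MY y (ys i) t > T (T (1 - e) (1 - e)) (1 - e)) \<and>
           (\<forall>i<n. \<forall>j<n.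
              MX (xs i) (xs j) t \<ge> T (T (MY (ys i) (ys j) t) (1 - e)) (1 - e) \<and>
              MY (ys i) (ys j) t \<ge> T (T (MX (xs i) (xs j) t) (1 - e)) (1 - e))"
proof -
  let ?c = "1 - e"
  have c: "?c \<in> {0..1}"
    using assms(9,10) by simp
  obtain M where M: "admissible X MX Y MY T M"
    and XY: "\<forall>x\<in>X. \<exists>y\<in>Y. ?c < M (Inl x) (Inr y) t" and YX: "\<forall>y\<in>Y. \<exists>x\<in>X. ?c < M (Inl x) (Inr y) t"
    using M_GH_less_imp_correspondence[OF assms(2-5,8,11)] by blast
  obtain FX where FX: "finite FX" "FX \<subseteq> X" "\<forall>x\<in>X. \<exists>c\<in>FX. ?c < MX x c t"
    using fcompact_finite_net[OF assms(2,6,8,9)] by blast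
  obtain FY where FY: "finite FY" "FY \<subseteq> Y" "\<forall>y\<in>Y. \<exists>c\<in>FY. ?c < MY y c t"
    using fcompact_finite_net[OF assms(3,7,8,9)] by blast
  let ?R = "\<lambda>x y. x \<in> X \<and> y \<in> Y \<and> ?c < M (Inl x) (Inr y) t"
  have "\<forall>x\<in>FX. \<exists>y. ?R x y" "\<forall>y\<in>FY. \<exists>x. ?R x y"
    using FX(2) FY(2) XY YX by blast+
  then obtain n :: nat and xs ys where R: "\<forall>i<n. ?R (xs i) (ys i)"
    and FX_xs: "FX \<subseteq> xs ` {..<n}" and FY_ys: "FY \<subseteq> ys ` {..<n}"
    by (rule enumerate_covering_pairs[OF FX(1) FY(1)])
  show ?thesis
  proof (rule exI[of _ n], rule exI[of _ xs], rule exI[of _ ys], intro conjI allI impI)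
    show "\<forall>x\<in>X. \<exists>i<n. T (T ?c ?c) ?c < MX x (xs i) t"
      by (rule finite_net_reindex[OF FX(3) FX_xs cont_tnorm_cube_le[OF assms(1) c]])
    show "\<forall>y\<in>Y. \<exists>i<n. T (T ?c ?c) ?c < MY y (ys i) t"
      by (rule finite_net_reindex[OF FY(3) FY_ys cont_tnorm_cube_le[OF assms(1) c]])
  next
    fix i j assume "i < n" "j < n"
    then have "?R (xs i) (ys i)" "?R (xs j) (ys j)"
      using R by simp_all
    then show "T (T (MY (ys i) (ys j) t) ?c) ?c \<le> MX (xs i) (xs j) t"
      and "T (T (MX (xs i) (xs j) t) ?c) ?c \<le> MY (ys i) (ys j) t"
      using admissible_close_pairs[OF M _ _ _ _ assms(8) c, of "xs i" "xs j" "ys i" "ys j"]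
      by (simp_all add: less_imp_le)
  qed (use R in simp_all)
qed

end
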